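(* Let $(Q,P)$ be a weakly quasi-lattice ordered group and let $\Lambda$ be a $P$-graph with $\mathrm{FA}(\Lambda)\neq\emptyset$. Suppose $\mu,\mu'\in\Lambda$ with $s(\mu)=r(\mu')$, $\mu\mu'\in\mathrm{FA}(\Lambda)$, and $(w_n)$ is a sequence converging to $w$ in $Z(\mu')$. Then there is a subsequence $(w_{n_k})$ such that $\mu\cdot w_{n_k}\to\mu\cdot w$ in $Z(\mu\mu')$.
   Context: $(Q,P)$ weakly quasi-lattice ordered: $Q$ a discrete group, $P\subseteq Q$ a subsemigroup containing the identity $e$ with $P\cap P^{-1}=\{e\}$, and, with $p\le r$ meaning $pq=r$ for some $q\in P$, any two elements of $P$ with a common upper bound have a least common upper bound. A $P$-graph is a countable small category $\Lambda$ (identities $\Lambda^{(0)}$, range/source $r,s$) with a functor $d:\Lambda\to P$ with unique factorisation (if $d(\lambda)=pq$ there are unique $\mu,\nu$ with $\lambda=\mu\nu$, $d(\mu)=p$, $d(\nu)=q$). Write $\lambda\Lambda=\{\lambda\mu: s(\lambda)=r(\mu)\}$, $\mu\preceq\lambda$ iff $\lambda\in\mu\Lambda$. $\mathrm{FA}(\Lambda)$ is the set of $\lambda$ such that for all $\mu\in\lambda\Lambda,\nu\in\Lambda$ there is finite $J\subseteq\Lambda$ with $\mu\Lambda\cap\nu\Lambda=\bigcup_{\kappa\in J}\kappa\Lambda$. A filter is a nonempty hereditary and directed subset of $\Lambda$ (w.r.t. $\preceq$); $\mathcal{F}(\Lambda)$ is the set of filters, topologised as a subspace of $\mathcal{P}(\Lambda)\cong\{0,1\}^\Lambda$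 with the product topology. For $\nu\in\Lambda$, $Z(\nu)=\{x\in\mathcal{F}(\Lambda):\nu\in x\}$ with the subspace topology. For a filter $w$ whose unique element of $\Lambda^{(0)}$ is $s(\mu)$, $\mu\cdot w=\{\zeta\in\Lambda:\zeta\preceq\mu\gamma\text{ for some }\gamma\in w\}$. *)

theory Defs
  imports "HOL-Analysis.Analysis" "HOL-Algebra.Group"
begin

definition ple :: "('q, 'm) monoid_scheme \<Rightarrow> 'q set \<Rightarrow> 'q \<Rightarrow> 'q \<Rightarrow> bool" where
  "ple Q P p r \<longleftrightarrow> (\<exists>q\<in>P. p \<otimes>\<^bsub>Q\<^esub> q = r)"

definition wqlo :: "('q, 'm) monoid_scheme \<Rightarrow> 'q set \<Rightarrow> bool" where
  "wqlo Q P \<longleftrightarrow>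
     group Q \<and> P \<subseteq> carrier Q \<and> \<one>\<^bsub>Q\<^esub> \<in> P \<and>
     (\<forall>p\<in>P. \<forall>q\<in>P. p \<otimes>\<^bsub>Q\<^esub> q \<in> P) \<and>
     P \<inter> (\<lambda>p. inv\<^bsub>Q\<^esub> p) ` P = {\<one>\<^bsub>Q\<^esub>} \<and>
     (\<forall>p\<in>P. \<forall>q\<in>P. (\<exists>t\<in>P. ple Q P p t \<and> ple Q P q t) \<longrightarrow>
        (\<exists>l\<in>P. ple Q P p l \<and> ple Q P q l \<and>
           (\<forall>t\<in>P. ple Q P p t \<and> ple Q P q t \<longrightarrow> ple Q P l t)))"

text \<open>A small category given by its set of morphisms \<open>mor\<close>, its set of identity
  morphisms \<open>obj\<close> (= \<Lambda>^(0)), range and source maps, composition \<open>cmp\<close> (meaningful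
  when \<open>src a = rng b\<close>; \<open>cmp a b\<close> is \<open>a b\<close>), and the degree functor \<open>deg\<close>.\<close>
record ('a, 'q) pgraph =
  mor :: "'a set"
  obj :: "'a set"
  rng :: "'a \<Rightarrow> 'a"
  src :: "'a \<Rightarrow> 'a"
  cmp :: "'a \<Rightarrow> 'a \<Rightarrow> 'a"
  deg :: "'a \<Rightarrow> 'q"

definition is_pgraph :: "('q, 'm) monoid_scheme \<Rightarrow> 'q set \<Rightarrow> ('a, 'q, 'z) pgraph_scheme \<Rightarrow> bool" where
  "is_pgraph Q P L \<longleftrightarrow>
     countable (mor L) \<and> obj L \<subseteq> mor L \<and>
     (\<forall>a\<in>mor L. rng L a \<in> obj L \<and> src L a \<in> obj L) \<and>
     (\<forall>v\<in>obj L. rng L v = v \<and> src L v = v) \<and>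
     (\<forall>a\<in>mor L. \<forall>b\<in>mor L. src L a = rng L b \<longrightarrow>
        cmp L a b \<in> mor L \<and> rng L (cmp L a b) = rng L a \<and> src L (cmp L a b) = src L b) \<and>
     (\<forall>a\<in>mor L. cmp L (rng L a) a = a \<and> cmp L a (src L a) = a) \<and>
     (\<forall>a\<in>mor L. \<forall>b\<in>mor L. \<forall>c\<in>mor L. src L a = rng L b \<and> src L b = rng L c \<longrightarrow>
        cmp L (cmp L a b) c = cmp L a (cmp L b c)) \<and>
     (\<forall>a\<in>mor L. deg L a \<in> P) \<and>
     (\<forall>v\<in>obj L. deg L v = \<one>\<^bsub>Q\<^esub>) \<and>
     (\<forall>a\<in>mor L. \<forall>b\<in>mor L. src L a = rng L b \<longrightarrow>
        deg L (cmp L a b) = deg L a \<otimes>\<^bsub>Q\<^esub> deg L b) \<and>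
     (\<forall>a\<in>mor L. \<forall>p\<in>P. \<forall>q\<in>P. deg L a = p \<otimes>\<^bsub>Q\<^esub> q \<longrightarrow>
        (\<exists>!(m, n). m \<in> mor L \<and> n \<in> mor L \<and> src L m = rng L n \<and>
                   a = cmp L m n \<and> deg L m = p \<and> deg L n = q))"

definition ext :: "('a, 'q, 'z) pgraph_scheme \<Rightarrow> 'a \<Rightarrow> 'a set" where
  "ext L a = {cmp L a b | b. b \<in> mor L \<and> src L a = rng L b}"

definition prec :: "('a, 'q, 'z) pgraph_scheme \<Rightarrow> 'a \<Rightarrow> 'a \<Rightarrow> bool" where
  "prec L m a \<longleftrightarrow> a \<in> ext L m"

definition FA :: "('a, 'q, 'z) pgraph_scheme \<Rightarrow> 'a set" where
  "FA L = {a \<in> mor L. \<forall>m\<in>ext L a. \<forall>n\<in>mor L.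
      \<exists>J. finite J \<and> J \<subseteq> mor L \<and> ext L m \<inter> ext L n = (\<Union>k\<in>J. ext L k)}"

definition is_filter :: "('a, 'q, 'z) pgraph_scheme \<Rightarrow> 'a set \<Rightarrow> bool" where
  "is_filter L x \<longleftrightarrow> x \<subseteq> mor L \<and> x \<noteq> {} \<and>
     (\<forall>a\<in>x. \<forall>m\<in>mor L. prec L m a \<longrightarrow> m \<in> x) \<and>
     (\<forall>a\<in>x. \<forall>b\<in>x. \<exists>c\<in>x. prec L a c \<and> prec L b c)"

definition filters :: "('a, 'q, 'z) pgraph_scheme \<Rightarrow> 'a set set" where
  "filters L = {x. is_filter L x}"

definition Zset :: "('a, 'q, 'z) pgraph_scheme \<Rightarrow> 'a \<Rightarrow> 'a set set" where
  "Zset L n = {x \<in> filters L. n \<in> x}"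

text \<open>Topology: \<open>\<P>(\<Lambda>) \<cong> {0,1}^\<Lambda>\<close> with the product topology; a subset is
  identified with its characteristic function on \<Lambda>.\<close>
definition chi :: "('a, 'q, 'z) pgraph_scheme \<Rightarrow> 'a set \<Rightarrow> ('a \<Rightarrow> bool)" where
  "chi L x = restrict (\<lambda>a. a \<in> x) (mor L)"

definition powerset_top :: "('a, 'q, 'z) pgraph_scheme \<Rightarrow> ('a \<Rightarrow> bool) topology" where
  "powerset_top L = product_topology (\<lambda>_. discrete_topology (UNIV :: bool set)) (mor L)"

definition converges_in :: "('a, 'q, 'z) pgraph_scheme \<Rightarrow> 'a set set \<Rightarrow> (nat \<Rightarrow> 'a set) \<Rightarrow> 'a set \<Rightarrow> bool" where
  "converges_in L S xs x \<longleftrightarrow>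
     (\<forall>n. xs n \<in> S) \<and> x \<in> S \<and>
     limitin (subtopology (powerset_top L) (chi L ` S)) (\<lambda>n. chi L (xs n)) (chi L x) sequentially"

definition act :: "('a, 'q, 'z) pgraph_scheme \<Rightarrow> 'a \<Rightarrow> 'a set \<Rightarrow> 'a set" where
  "act L m w = {z \<in> mor L. \<exists>g\<in>w. src L m = rng L g \<and> prec L z (cmp L m g)}"

end

theory Submission
  imports Defs
begin

text \<open>Convergence in \<open>{0,1}\<^sup>\<Lambda>\<close> is eventual agreement on each coordinate.
  For a filter \<open>v \<ni> \<mu>'\<close>, whether \<open>\<zeta> \<in> \<mu>\<cdot>v\<close> depends on only finitely many
  coordinates of \<open>v\<close>: as \<open>\<mu>\<mu>' \<in> FA(\<Lambda>)\<close>, \<open>\<mu>\<mu>'\<Lambda> \<inter> \<zeta>\<Lambda> = \<Union>\<^sub>\<kappa>\<^sub>\<in>\<^sub>J \<kappa>\<Lambda>\<close> with \<open>J\<close> finite;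
  every \<open>\<kappa> \<in> J\<close> is \<open>\<mu>\<gamma>\<^sub>\<kappa>\<close> with \<open>\<mu>' \<preceq> \<gamma>\<^sub>\<kappa>\<close>, and left cancellation of \<open>\<mu>\<close> (unique
  factorisation plus cancellation in \<open>Q\<close>) shows \<open>\<zeta> \<in> \<mu>\<cdot>v\<close> iff \<open>\<gamma>\<^sub>\<kappa> \<in> v\<close> for some \<open>\<kappa>\<close>.
  Hence \<open>\<mu>\<cdot>w\<^sub>n \<rightarrow> \<mu>\<cdot>w\<close> along the whole sequence, so the subsequence can be the
  identity.\<close>

lemma limitin_discrete_topology:
  "limitin (discrete_topology U) f l F \<longleftrightarrow> l \<in> U \<and> eventually (\<lambda>x. f x = l) F"
proof -
  have "(\<forall>V. V \<subseteq> U \<and> l \<in> V \<longrightarrow> eventually (\<lambda>x. f x \<in> V) F) \<longleftrightarrow> eventually (\<lambda>x. f x = l) F"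
    if "l \<in> U"
  proof
    assume "\<forall>V. V \<subseteq> U \<and> l \<in> V \<longrightarrow> eventually (\<lambda>x. f x \<in> V) F"
    then have "eventually (\<lambda>x. f x \<in> {l}) F"
      using that by blast
    then show "eventually (\<lambda>x. f x = l) F"
      by simp
  next
    assume "eventually (\<lambda>x. f x = l) F"
    then show "\<forall>V. V \<subseteq> U \<and> l \<in> V \<longrightarrow> eventually (\<lambda>x. f x \<in> V) F"
      by (auto elim: eventually_mono)
  qed
  then show ?thesis
    unfolding limitin_def topspace_discrete_topology openin_discrete_topology by blast
qed

lemma limitin_powerset_top_chi:
  "limitin (powerset_top L) (\<lambda>n. chi L (xs n)) (chi L x) F \<longleftrightarrow>
     (\<forall>a\<in>mor L. \<forall>\<^sub>F n in F. (a \<in> xs n) = (a \<in> x))"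
  unfolding powerset_top_def limitin_componentwise limitin_discrete_topology
  by (simp add: chi_def)

lemma converges_in_iff:
  "converges_in L S xs x \<longleftrightarrow>
     (\<forall>n. xs n \<in> S) \<and> x \<in> S \<and> (\<forall>a\<in>mor L. \<forall>\<^sub>F n in sequentially. (a \<in> xs n) = (a \<in> x))"
  unfolding converges_in_def limitin_subtopology limitin_powerset_top_chi by auto

lemma FA_cover:
  assumes "a \<in> FA L" and "b \<in> ext L a" and "c \<in> mor L"
  obtains J where "finite J" "J \<subseteq> mor L" "ext L b \<inter> ext L c = (\<Union>k\<in>J. ext L k)"
  using assms(1)[unfolded FA_def, THEN CollectD, THEN conjunct2, rule_format, OF assms(2,3)]
  by (elim exE conjE) (rule that)

locale P_graph =
  fixes Q :: "('q, 'm) monoid_scheme" and P :: "'q set"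
    and L :: "('a, 'q, 'z) pgraph_scheme"
  assumes is_pgraph: "is_pgraph Q P L"
    and group: "group Q"
    and P_subset: "P \<subseteq> carrier Q"
begin

lemma src_mor: "a \<in> mor L \<Longrightarrow> src L a \<in> mor L"
  using is_pgraph unfolding is_pgraph_def by (elim conjE) (simp add: subset_iff)

lemma rng_src: "a \<in> mor L \<Longrightarrow> rng L (src L a) = src L a"
  using is_pgraph unfolding is_pgraph_def by (elim conjE) simp

lemma cmp_src: "a \<in> mor L \<Longrightarrow> cmp L a (src L a) = a"
  using is_pgraph unfolding is_pgraph_def by (elim conjE) simp

lemma
  assumes "a \<in> mor L" "b \<in> mor L" "src L a = rng L b"
  shows cmp_mor: "cmp L a b \<in> mor L"
    and rng_cmp: "rng L (cmp L a b) = rng L a"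
    and src_cmp: "src L (cmp L a b) = src L b"
  using is_pgraph assms unfolding is_pgraph_def by (elim conjE; simp)+

lemma cmp_assoc:
  "\<lbrakk>a \<in> mor L; b \<in> mor L; c \<in> mor L; src L a = rng L b; src L b = rng L c\<rbrakk> \<Longrightarrow>
     cmp L (cmp L a b) c = cmp L a (cmp L b c)"
  using is_pgraph unfolding is_pgraph_def by (elim conjE) simp

lemma deg_in_P: "a \<in> mor L \<Longrightarrow> deg L a \<in> P"
  using is_pgraph unfolding is_pgraph_def by (elim conjE) simp

lemma deg_carrier: "a \<in> mor L \<Longrightarrow> deg L a \<in> carrier Q"
  using deg_in_P P_subset by blast

lemma deg_cmp:
  "\<lbrakk>a \<in> mor L; b \<in> mor L; src L a = rng L b\<rbrakk> \<Longrightarrow> deg L (cmp L a b) = deg L a \<otimes>\<^bsub>Q\<^esub> deg L b"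
  using is_pgraph unfolding is_pgraph_def by (elim conjE) simp

lemma unique_factorisation:
  "\<lbrakk>a \<in> mor L; p \<in> P; q \<in> P; deg L a = p \<otimes>\<^bsub>Q\<^esub> q\<rbrakk> \<Longrightarrow>
     \<exists>!(m, n). m \<in> mor L \<and> n \<in> mor L \<and> src L m = rng L n \<and>
               a = cmp L m n \<and> deg L m = p \<and> deg L n = q"
  using is_pgraph unfolding is_pgraph_def by (elim conjE) simp

lemma cmp_left_cancel:
  assumes m: "m \<in> mor L" and x: "x \<in> mor L" and y: "y \<in> mor L"
    and mx: "src L m = rng L x" and my: "src L m = rng L y"
    and eq: "cmp L m x = cmp L m y"
  shows "x = y"
proof -
  have "deg L m \<otimes>\<^bsub>Q\<^esub> deg L x = deg L m \<otimes>\<^bsub>Q\<^esub> deg L y"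
    using deg_cmp[OF m x mx] deg_cmp[OF m y my] eq by simp
  then have deg_eq: "deg L x = deg L y"
    using monoid.Units_l_cancel[OF group.is_monoid[OF group], of "deg L m" "deg L x" "deg L y"]
      group.Units_eq[OF group] deg_carrier[OF m] deg_carrier[OF x] deg_carrier[OF y] by simp
  define factors where "factors = (\<lambda>(a, b). a \<in> mor L \<and> b \<in> mor L \<and> src L a = rng L b \<and>
          cmp L m x = cmp L a b \<and> deg L a = deg L m \<and> deg L b = deg L x)"
  have "\<exists>!p. factors p"
    using unique_factorisation[OF cmp_mor[OF m x mx] deg_in_P[OF m] deg_in_P[OF x] deg_cmp[OF m x mx]]
    unfolding factors_def .
  moreover have "factors (m, x)" and "factors (m, y)"
    unfolding factors_def using m x y mx my eq deg_eq by auto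
  ultimately have "(m, x) = (m, y)"
    by blast
  then show ?thesis by simp
qed

lemma prec_iff: "prec L a b \<longleftrightarrow> (\<exists>c\<in>mor L. src L a = rng L c \<and> b = cmp L a c)"
  unfolding prec_def ext_def by auto

lemma prec_refl: "a \<in> mor L \<Longrightarrow> prec L a a"
  unfolding prec_iff using src_mor rng_src cmp_src by metis

lemma
  assumes "a \<in> mor L" "prec L a b"
  shows prec_mor: "b \<in> mor L" and prec_rng: "rng L b = rng L a"
  using assms cmp_mor rng_cmp unfolding prec_iff by auto

lemma prec_trans:
  assumes a: "a \<in> mor L" and ab: "prec L a b" and bc: "prec L b c"
  shows "prec L a c"
proof -
  obtain x where x: "x \<in> mor L" "src L a = rng L x" "b = cmp L a x"
    using ab prec_iff by blast
  obtain y where y: "y \<in> mor L" "src L b = rng L y" "c = cmp L b y"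
    using bc prec_iff by blast
  have "src L x = rng L y"
    using src_cmp[OF a x(1,2)] x(3) y(2) by simp
  then have "c = cmp L a (cmp L x y)" and "cmp L x y \<in> mor L" and "rng L (cmp L x y) = rng L x"
    using cmp_assoc[OF a x(1) y(1) x(2)] cmp_mor rng_cmp x y by auto
  then show ?thesis
    unfolding prec_iff using x by metis
qed

lemma prec_cmp_left_iff:
  assumes m: "m \<in> mor L" and g: "g \<in> mor L" and h: "h \<in> mor L"
    and mg: "src L m = rng L g" and mh: "src L m = rng L h"
  shows "prec L (cmp L m g) (cmp L m h) \<longleftrightarrow> prec L g h"
proof
  assume "prec L (cmp L m g) (cmp L m h)"
  then obtain c where c: "c \<in> mor L" "src L g = rng L c" "cmp L m h = cmp L (cmp L m g) c"
    unfolding prec_iff using src_cmp[OF m g mg] by auto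
  then have "cmp L m h = cmp L m (cmp L g c)"
    using cmp_assoc[OF m g c(1) mg] by simp
  then have "h = cmp L g c"
    using cmp_left_cancel[OF m h cmp_mor[OF g c(1,2)] mh] rng_cmp[OF g c(1,2)] mg by simp
  then show "prec L g h"
    unfolding prec_iff using c by blast
next
  assume "prec L g h"
  then obtain c where c: "c \<in> mor L" "src L g = rng L c" "h = cmp L g c"
    unfolding prec_iff by blast
  then have "cmp L m h = cmp L (cmp L m g) c"
    using cmp_assoc[OF m g c(1) mg] by simp
  then show "prec L (cmp L m g) (cmp L m h)"
    unfolding prec_iff using c src_cmp[OF m g mg] by auto
qed

lemma prec_cmpE:
  assumes m: "m \<in> mor L" and a: "a \<in> mor L" and ma: "src L m = rng L a"
    and "prec L (cmp L m a) k"
  obtains g where "prec L a g" and "k = cmp L m g"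
proof -
  obtain c where c: "c \<in> mor L" "src L a = rng L c" "k = cmp L (cmp L m a) c"
    using assms(4) unfolding prec_iff using src_cmp[OF m a ma] by auto
  then have "prec L a (cmp L a c)" and "k = cmp L m (cmp L a c)"
    using cmp_assoc[OF m a c(1) ma] unfolding prec_iff by auto
  then show ?thesis
    using that by blast
qed

lemma filter_mor: "\<lbrakk>is_filter L x; a \<in> x\<rbrakk> \<Longrightarrow> a \<in> mor L"
  unfolding is_filter_def by blast

lemma filter_hereditary: "\<lbrakk>is_filter L x; a \<in> x; b \<in> mor L; prec L b a\<rbrakk> \<Longrightarrow> b \<in> x"
  unfolding is_filter_def by blast

lemma filter_directed: "\<lbrakk>is_filter L x; a \<in> x; b \<in> x\<rbrakk> \<Longrightarrow> \<exists>c\<in>x. prec L a c \<and> prec L b c"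
  unfolding is_filter_def by blast

lemma cmp_in_act:
  "\<lbrakk>m \<in> mor L; m' \<in> mor L; src L m = rng L m'; m' \<in> w\<rbrakk> \<Longrightarrow> cmp L m m' \<in> act L m w"
  unfolding act_def using cmp_mor prec_refl by blast

lemma act_is_filter:
  assumes w: "is_filter L w" and "m' \<in> w" and m: "m \<in> mor L" and "src L m = rng L m'"
  shows "is_filter L (act L m w)"
  unfolding is_filter_def
proof (intro conjI ballI impI)
  show "act L m w \<subseteq> mor L"
    unfolding act_def by blast
  show "act L m w \<noteq> {}"
    using cmp_in_act assms filter_mor by blast
next
  fix a x
  assume "a \<in> act L m w" "x \<in> mor L" "prec L x a"
  then show "x \<in> act L m w"
    unfolding act_def using prec_trans by blast
next
  fix a b
  assume a: "a \<in> act L m w" and b: "b \<in> act L m w"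
  obtain g1 where g1: "g1 \<in> w" "src L m = rng L g1" "prec L a (cmp L m g1)"
    using a unfolding act_def by blast
  obtain g2 where g2: "g2 \<in> w" "src L m = rng L g2" "prec L b (cmp L m g2)"
    using b unfolding act_def by blast
  obtain c where c: "c \<in> w" "prec L g1 c" "prec L g2 c"
    using filter_directed[OF w g1(1) g2(1)] by blast
  have mor: "g1 \<in> mor L" "g2 \<in> mor L" "c \<in> mor L" "a \<in> mor L" "b \<in> mor L"
    using filter_mor[OF w] g1 g2 c a b unfolding act_def by auto
  have mc: "src L m = rng L c"
    using prec_rng[OF mor(1) c(2)] g1(2) by simp
  have "prec L a (cmp L m c)" "prec L b (cmp L m c)"
    using prec_trans mor g1 g2 c prec_cmp_left_iff[OF m] mc by metis+
  moreover have "cmp L m c \<in> act L m w"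
    using cmp_in_act[OF m mor(3) mc c(1)] .
  ultimately show "\<exists>c\<in>act L m w. prec L a c \<and> prec L b c"
    by blast
qed

lemma act_in_Zset:
  "\<lbrakk>w \<in> Zset L m'; m \<in> mor L; src L m = rng L m'\<rbrakk> \<Longrightarrow> act L m w \<in> Zset L (cmp L m m')"
  unfolding Zset_def filters_def using act_is_filter cmp_in_act filter_mor by blast

lemma FA_cmp_left_cover:
  assumes m: "m \<in> mor L" and m': "m' \<in> mor L" and mm': "src L m = rng L m'"
    and FA: "cmp L m m' \<in> FA L" and z: "z \<in> mor L"
  obtains G where "finite G"
    and "\<And>g. g \<in> G \<Longrightarrow> prec L m' g \<and> prec L z (cmp L m g)"
    and "\<And>h. \<lbrakk>prec L m' h; prec L z (cmp L m h)\<rbrakk> \<Longrightarrow> \<exists>g\<in>G. prec L g h"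
proof -
  have "cmp L m m' \<in> ext L (cmp L m m')"
    using prec_refl[OF cmp_mor[OF m m' mm']] unfolding prec_def .
  then obtain J where J: "finite J" "J \<subseteq> mor L"
    and J_eq: "ext L (cmp L m m') \<inter> ext L z = (\<Union>k\<in>J. ext L k)"
    using FA_cover[OF FA _ z] by metis
  have J_cover: "prec L (cmp L m m') a \<and> prec L z a \<longleftrightarrow> (\<exists>k\<in>J. prec L k a)" for a
    unfolding prec_def by (simp only: Int_iff[symmetric] J_eq UN_iff)
  define G where "G = {g. prec L m' g \<and> cmp L m g \<in> J}"
  have G_mor: "g \<in> mor L" and G_rng: "src L m = rng L g" if "g \<in> G" for g
    using that prec_mor[OF m'] prec_rng[OF m'] mm' unfolding G_def by auto
  have "inj_on (cmp L m) G"
    by (rule inj_onI) (use cmp_left_cancel[OF m] G_mor G_rng in blast)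
  moreover have "finite (cmp L m ` G)"
    by (rule finite_subset[OF _ J(1)]) (auto simp: G_def)
  ultimately have "finite G"
    by (rule finite_imageD[rotated])
  moreover have "prec L m' g \<and> prec L z (cmp L m g)" if "g \<in> G" for g
    using that J_cover prec_refl J(2) unfolding G_def by blast
  moreover have "\<exists>g\<in>G. prec L g h" if h: "prec L m' h" "prec L z (cmp L m h)" for h
  proof -
    have h_mor: "h \<in> mor L" and mh: "src L m = rng L h"
      using prec_mor[OF m' h(1)] prec_rng[OF m' h(1)] mm' by auto
    have "prec L (cmp L m m') (cmp L m h)"
      using prec_cmp_left_iff[OF m m' h_mor mm' mh] h(1) by blast
    then obtain k where k: "k \<in> J" "prec L k (cmp L m h)"
      using J_cover h(2) by blast
    then have "prec L (cmp L m m') k"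
      using J_cover prec_refl J(2) by blast
    then obtain g where "prec L m' g" and k_eq: "k = cmp L m g"
      by (rule prec_cmpE[OF m m' mm'])
    then have "g \<in> G"
      unfolding G_def using k(1) by blast
    moreover have "prec L g h"
      using k(2) k_eq prec_cmp_left_iff[OF m G_mor[OF \<open>g \<in> G\<close>] h_mor G_rng[OF \<open>g \<in> G\<close>] mh]
      by simp
    ultimately show ?thesis
      by blast
  qed
  ultimately show ?thesis
    using that by blast
qed

lemma mem_act_iff_meets_finite:
  assumes m: "m \<in> mor L" and m': "m' \<in> mor L" and mm': "src L m = rng L m'"
    and FA: "cmp L m m' \<in> FA L" and z: "z \<in> mor L"
  obtains G where "finite G" "G \<subseteq> mor L"
    and "\<And>v. \<lbrakk>is_filter L v; m' \<in> v\<rbrakk> \<Longrightarrow> z \<in> act L m v \<longleftrightarrow> G \<inter> v \<noteq> {}"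
proof -
  obtain G where "finite G"
    and G_prec: "\<And>g. g \<in> G \<Longrightarrow> prec L m' g \<and> prec L z (cmp L m g)"
    and G_cover: "\<And>h. \<lbrakk>prec L m' h; prec L z (cmp L m h)\<rbrakk> \<Longrightarrow> \<exists>g\<in>G. prec L g h"
    using FA_cmp_left_cover[OF m m' mm' FA z] by metis
  have G_mor: "G \<subseteq> mor L"
    using G_prec prec_mor[OF m'] by blast
  have "z \<in> act L m v \<longleftrightarrow> G \<inter> v \<noteq> {}" if v: "is_filter L v" "m' \<in> v" for v
  proof
    assume "z \<in> act L m v"
    then obtain g where g: "g \<in> v" "src L m = rng L g" "prec L z (cmp L m g)"
      unfolding act_def by blast
    obtain h where h: "h \<in> v" "prec L g h" "prec L m' h"
      using filter_directed[OF v(1) g(1) v(2)] by blast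
    have g_mor: "g \<in> mor L" and h_mor: "h \<in> mor L"
      using filter_mor[OF v(1)] g(1) h(1) by blast+
    have mh: "src L m = rng L h"
      using prec_rng[OF g_mor h(2)] g(2) by simp
    have "prec L z (cmp L m h)"
      using prec_trans[OF z g(3)] prec_cmp_left_iff[OF m g_mor h_mor g(2) mh] h(2) by blast
    then obtain g' where "g' \<in> G" "prec L g' h"
      using G_cover h(3) by blast
    then show "G \<inter> v \<noteq> {}"
      using filter_hereditary[OF v(1) h(1)] G_mor by blast
  next
    assume "G \<inter> v \<noteq> {}"
    then obtain g where g: "g \<in> G" "g \<in> v"
      by blast
    have "src L m = rng L g"
      using G_prec[OF g(1)] prec_rng[OF m'] mm' by simp
    then show "z \<in> act L m v"
      unfolding act_def using z g(2) G_prec[OF g(1)] by blast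
  qed
  then show ?thesis
    using that \<open>finite G\<close> G_mor by metis
qed

lemma act_converges:
  assumes m: "m \<in> mor L" and m': "m' \<in> mor L" and mm': "src L m = rng L m'"
    and FA: "cmp L m m' \<in> FA L"
    and conv: "converges_in L (Zset L m') ws w"
  shows "converges_in L (Zset L (cmp L m m')) (\<lambda>n. act L m (ws n)) (act L m w)"
proof -
  have ws: "\<And>n. ws n \<in> Zset L m'" and w: "w \<in> Zset L m'"
    and pointwise: "\<forall>a\<in>mor L. \<forall>\<^sub>F n in sequentially. (a \<in> ws n) = (a \<in> w)"
    using conv unfolding converges_in_iff by blast+
  have ws_filter: "is_filter L (ws n)" "m' \<in> ws n" for n
    using ws[of n] unfolding Zset_def filters_def by simp_all
  have w_filter: "is_filter L w" "m' \<in> w"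
    using w unfolding Zset_def filters_def by simp_all
  have "\<forall>\<^sub>F n in sequentially. (z \<in> act L m (ws n)) = (z \<in> act L m w)" if z: "z \<in> mor L" for z
  proof -
    obtain G where "finite G" "G \<subseteq> mor L"
      and G: "\<And>v. \<lbrakk>is_filter L v; m' \<in> v\<rbrakk> \<Longrightarrow> z \<in> act L m v \<longleftrightarrow> G \<inter> v \<noteq> {}"
      using mem_act_iff_meets_finite[OF m m' mm' FA z] by metis
    have "\<forall>g\<in>G. \<forall>\<^sub>F n in sequentially. (g \<in> ws n) = (g \<in> w)"
      using pointwise \<open>G \<subseteq> mor L\<close> by blast
    then have "\<forall>\<^sub>F n in sequentially. \<forall>g\<in>G. (g \<in> ws n) = (g \<in> w)"
      by (rule eventually_ball_finite[OF \<open>finite G\<close>])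
    then show ?thesis
    proof (rule eventually_mono)
      fix n assume "\<forall>g\<in>G. (g \<in> ws n) = (g \<in> w)"
      then have "G \<inter> ws n \<noteq> {} \<longleftrightarrow> G \<inter> w \<noteq> {}"
        by blast
      then show "(z \<in> act L m (ws n)) = (z \<in> act L m w)"
        using G[OF ws_filter] G[OF w_filter] by simp
    qed
  qed
  then show ?thesis
    unfolding converges_in_iff using act_in_Zset[OF ws m mm'] act_in_Zset[OF w m mm'] by blast
qed

end

theorem lemma5p13:
  fixes Q :: "('q, 'm) monoid_scheme" and P :: "'q set"
    and L :: "('a, 'q, 'z) pgraph_scheme"
    and m m' :: 'a and ws :: "nat \<Rightarrow> 'a set" and w :: "'a set"
  assumes "wqlo Q P"
    and "is_pgraph Q P L"
    and "FA L \<noteq> {}"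
    and "m \<in> mor L" and "m' \<in> mor L" and "src L m = rng L m'"
    and "cmp L m m' \<in> FA L"
    and "converges_in L (Zset L m') ws w"
  shows "\<exists>g::nat \<Rightarrow> nat. strict_mono g \<and>
           converges_in L (Zset L (cmp L m m')) (\<lambda>k. act L m (ws (g k))) (act L m w)"
proof -
  have "group Q" and "P \<subseteq> carrier Q"
    using assms(1) unfolding wqlo_def by (rule conjunct1, rule conjunct1[OF conjunct2])
  then interpret P_graph Q P L
    using assms(2) by (intro P_graph.intro)
  have "converges_in L (Zset L (cmp L m m')) (\<lambda>k. act L m (ws (id k))) (act L m w)"
    using act_converges[OF assms(4-8)] by simp
  then show ?thesis
    using strict_mono_id by blast
qed

end
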